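(* Let $\Gamma$ be an abelian group containing no element of order two. Let $M_1,M_2$ be matroids on a common ground set $E$, $\psi\colon E\to\Gamma$ a labeling, and $B$ a common basis of $M_1$ and $M_2$. If $C$ is a directed cycle of $D_{M_1,M_2}(B)$ with $\psi'(C)\neq 0$ such that no directed cycle $C'$ of $D_{M_1,M_2}(B)$ with $\psi'(C')\ne 0$ satisfies $V(C')\subsetneq V(C)$, then $B\triangle V(C)$ is a common basis of $M_1$ and $M_2$.
   Context: $\psi(S):=\sum_{x\in S}\psi(x)$. For a common basis $B$ of $M_1,M_2$, the digraph $D_{M_1,M_2}(B)$ has vertex set $E$ and arcs: for each $x\in B$, $y\in E\setminus B$ with $B-x+y$ a basis of $M_1$, an arc $xy$ with label $\psi'(xy):=\psi(y)$; and for each $x\in B$, $y\in E\setminus B$ with $B-x+y$ a basis of $M_2$, an arc $yx$ with label $\psi'(yx):=-\psi(x)$. The label $\psi'(C)$ of a directed cycle is the sum of the labels of its arcs; $C$ is non-zero if $\psi'(C)\neq0$. *)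

theory Defs
  imports Main
begin

definition matroid :: "'a set \<Rightarrow> 'a set set \<Rightarrow> bool" where
  "matroid E \<B> \<longleftrightarrow> finite E \<and> \<B> \<noteq> {} \<and> (\<forall>B\<in>\<B>. B \<subseteq> E) \<and>
     (\<forall>B1\<in>\<B>. \<forall>B2\<in>\<B>. \<forall>x\<in>B1 - B2. \<exists>y\<in>B2 - B1. insert y (B1 - {x}) \<in> \<B>)"

definition exch_arcs :: "'a set \<Rightarrow> 'a set set \<Rightarrow> 'a set set \<Rightarrow> 'a set \<Rightarrow> ('a \<times> 'a) set" where
  "exch_arcs E M1 M2 B =
     {(x, y) | x y. x \<in> B \<and> y \<in> E - B \<and> insert y (B - {x}) \<in> M1} \<union>
     {(y, x) | x y. x \<in> B \<and> y \<in> E - B \<and> insert y (B - {x}) \<in> M2}"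

definition arc_label :: "'a set \<Rightarrow> ('a \<Rightarrow> 'g::ab_group_add) \<Rightarrow> 'a \<times> 'a \<Rightarrow> 'g" where
  "arc_label B \<psi> a = (if fst a \<in> B then \<psi> (snd a) else - \<psi> (snd a))"

definition dcycle :: "('a \<times> 'a) set \<Rightarrow> 'a list \<Rightarrow> bool" where
  "dcycle A cs \<longleftrightarrow> cs \<noteq> [] \<and> distinct cs \<and>
     (\<forall>i < length cs. (cs ! i, cs ! ((i + 1) mod length cs)) \<in> A)"

definition cycle_label :: "'a set \<Rightarrow> ('a \<Rightarrow> 'g::ab_group_add) \<Rightarrow> 'a list \<Rightarrow> 'g" where
  "cycle_label B \<psi> cs = (\<Sum>i<length cs. arc_label B \<psi> (cs ! i, cs ! ((i + 1) mod length cs)))"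

end

theory Submission
  imports Defs "HOL-Combinatorics.Orbits" "HOL-Library.Multiset"
begin

text \<open>
  Let s be the successor map of C and X = V(C) \<inter> B, so that B \<triangle> V(C) = B - X + s(X) and every
  x \<in> X has the M1-exchange x \<rightarrow> s x. By the unique matching lemma for bases it suffices that no
  nonempty X' \<subseteq> X carries a fixed-point-free map \<sigma> with B - x + s(\<sigma> x) \<in> M1 for all x \<in> X'.
  Given such a \<sigma>, the chords x \<rightarrow> s(\<sigma> x) are arcs of D; taking two copies of C and replacing,
  in one of them, the arcs x \<rightarrow> s x (x on a cycle of \<sigma>) by these chords gives a closed walk H
  through every vertex of C exactly twice. Arc labels depend only on heads, so \<psi>'(H) = 2\<psi>'(C).
  Split off a cycle of H that misses a vertex of C and decompose the rest into cycles: by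
  minimality every cycle on a proper subset of V(C) has label 0, and at most one cycle through all
  of V(C) remains. Hence 2\<psi>'(C) \<in> {0, \<psi>'(C)}, so \<psi>'(C) = 0 as \<Gamma> has no element of order two.
  Reversing all arcs exchanges the roles of M1 and M2.
\<close>

section \<open>Cycles of a digraph as lists\<close>

abbreviation cycle_arcs :: "'a list \<Rightarrow> ('a \<times> 'a) list" where
  "cycle_arcs cs \<equiv> zip cs (rotate1 cs)"

lemma dcycle_iff: "dcycle A cs \<longleftrightarrow> cs \<noteq> [] \<and> distinct cs \<and> set (cycle_arcs cs) \<subseteq> A"
  by (auto simp: dcycle_def set_zip nth_rotate1)

lemma rotate1_zip: "length xs = length ys \<Longrightarrow> rotate1 (zip xs ys) = zip (rotate1 xs) (rotate1 ys)"
  by (cases xs; cases ys) auto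

lemma set_cycle_arcs_rev: "set (cycle_arcs (rev cs)) = (set (cycle_arcs cs))\<inverse>"
proof -
  have rot: "rotate1 (rev (rotate1 cs)) = rev cs" by (cases cs) auto
  have "cycle_arcs (rev cs) = rotate1 (zip (rev (rotate1 cs)) (rev cs))"
    by (subst rotate1_zip) (simp_all add: rot)
  also have "\<dots> = rotate1 (rev (zip (rotate1 cs) cs))" by (simp add: zip_rev)
  finally show ?thesis by (subst zip_commute) auto
qed

lemma dcycle_converse_rev: "dcycle (A\<inverse>) (rev cs) \<longleftrightarrow> dcycle A cs"
  by (auto simp: dcycle_iff set_cycle_arcs_rev)

text \<open>\<open>rotate1 Z = map f Z\<close> says that Z runs once around a cycle of the functional graph of f.\<close>

lemma cycle_arcs_of_map: "rotate1 Z = map f Z \<Longrightarrow> cycle_arcs Z = map (\<lambda>z. (z, f z)) Z"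
  by (simp add: zip_map2 zip_same_conv_map)

lemma bij_betw_of_rotate1:
  assumes "distinct Z" "rotate1 Z = map f Z" shows "bij_betw f (set Z) (set Z)"
proof -
  have "distinct (map f Z)" using assms by (metis distinct1_rotate)
  then show ?thesis using assms
    by (simp add: bij_betw_def distinct_map flip: set_map) (metis set_rotate1)
qed

lemma finite_map_has_cycle:
  assumes "finite V" "\<And>v. v \<in> V \<Longrightarrow> s v \<in> V" "v0 \<in> V"
  obtains Z where "Z \<noteq> []" "distinct Z" "set Z \<subseteq> V" "rotate1 Z = map s Z"
proof -
  have iter: "(s ^^ n) v \<in> V" if "v \<in> V" for n v
    using that assms(2) by (induction n) auto
  have "\<not> inj (\<lambda>n. (s ^^ n) v0)"
  proof
    assume "inj (\<lambda>n. (s ^^ n) v0)"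
    moreover have "finite (range (\<lambda>n. (s ^^ n) v0))"
      using iter assms(1,3) by (auto intro: finite_subset)
    ultimately show False using finite_imageD by blast
  qed
  then obtain a b where "a < b" "(s ^^ a) v0 = (s ^^ b) v0"
    unfolding inj_def by (metis linorder_neqE_nat)
  define u where "u = (s ^^ a) v0"
  have "(s ^^ (b - a)) u = (s ^^ (b - a + a)) v0"
    by (simp add: u_def funpow_add)
  also have "\<dots> = u"
    using \<open>a < b\<close> \<open>(s ^^ a) v0 = (s ^^ b) v0\<close> by (simp add: u_def)
  finally have "(s ^^ (b - a)) u = u" .
  then have "u \<in> orbit s u"
    using \<open>a < b\<close> by (auto simp: orbit_altdef intro!: exI[of _ "b - a"])
  define p where "p = funpow_dist1 s u u"
  define Z where "Z = map (\<lambda>n. (s ^^ n) u) [0..<p]"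
  have "rotate1 Z = map s Z"
  proof -
    have "map s Z = map (\<lambda>n. (s ^^ n) u) (map Suc [0..<p])"
      by (simp add: Z_def)
    also have "\<dots> = map (\<lambda>n. (s ^^ n) u) [1..<p] @ [u]"
      using funpow_dist1_prop[OF \<open>u \<in> orbit s u\<close>] by (simp add: map_Suc_upt p_def)
    also have "\<dots> = rotate1 Z"
      by (simp add: Z_def p_def upt_rec)
    finally show ?thesis by simp
  qed
  moreover have "distinct Z"
    using inj_on_funpow_dist1[OF \<open>u \<in> orbit s u\<close>]
    by (simp add: Z_def p_def distinct_map atLeast0LessThan del: upt_Suc)
  moreover have "set Z \<subseteq> V" "Z \<noteq> []"
    using iter assms(3) by (auto simp: Z_def p_def u_def)
  ultimately show ?thesis using that by blast
qed

text \<open>\<open>cycle_succ cs v\<close> is unspecified for \<open>v \<notin> set cs\<close>.\<close>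

definition cycle_succ :: "'a list \<Rightarrow> 'a \<Rightarrow> 'a" where
  "cycle_succ cs v = the (map_of (cycle_arcs cs) v)"

lemma rotate1_eq_map_cycle_succ: "distinct cs \<Longrightarrow> rotate1 cs = map (cycle_succ cs) cs"
  by (rule nth_equalityI) (simp_all add: cycle_succ_def map_of_zip_nth)

lemma bij_betw_cycle_succ: "distinct cs \<Longrightarrow> bij_betw (cycle_succ cs) (set cs) (set cs)"
  by (rule bij_betw_of_rotate1) (simp_all add: rotate1_eq_map_cycle_succ)

lemma dcycle_cycle_succ_arc: "dcycle A cs \<Longrightarrow> v \<in> set cs \<Longrightarrow> (v, cycle_succ cs v) \<in> A"
  by (auto simp: dcycle_iff cycle_arcs_of_map[OF rotate1_eq_map_cycle_succ])

lemma shortcut_cycle: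
  assumes C: "distinct C" and t: "t \<in> set C" and u: "u \<in> set C" "u \<noteq> cycle_succ C t"
  obtains Z where "Z \<noteq> []" "distinct Z" "set Z \<subseteq> set C" "cycle_succ C t \<notin> set Z"
    "rotate1 Z = map ((cycle_succ C)(t := u)) Z"
proof -
  let ?s = "(cycle_succ C)(t := u)"
  have bij: "bij_betw (cycle_succ C) (set C) (set C)" by (rule bij_betw_cycle_succ[OF C])
  then have "?s v \<in> set C" if "v \<in> set C" for v
    using that u(1) by (auto simp: bij_betw_def)
  then obtain Z where Z: "Z \<noteq> []" "distinct Z" "set Z \<subseteq> set C" "rotate1 Z = map ?s Z"
    using finite_map_has_cycle[of "set C" ?s t] t by blast
  have "cycle_succ C t \<notin> ?s ` set Z"
  proof
    assume "cycle_succ C t \<in> ?s ` set Z"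
    then obtain w where "w \<in> set C" "?s w = cycle_succ C t" using Z(3) by auto
    then show False
      using u(2) t bij by (cases "w = t") (auto simp: bij_betw_def inj_on_def)
  qed
  then have "cycle_succ C t \<notin> set Z" by (metis Z(4) set_map set_rotate1)
  with Z that show ?thesis by blast
qed

lemma bij_betw_extend_id:
  assumes "bij_betw \<sigma> S S" "S \<subseteq> A"
  shows "bij_betw (\<lambda>v. if v \<in> S then \<sigma> v else v) A A"
proof -
  have "bij_betw (\<lambda>v. if v \<in> S then \<sigma> v else v) (S \<union> (A - S)) (S \<union> (A - S))"
  proof (rule bij_betw_combine)
    show "bij_betw (\<lambda>v. if v \<in> S then \<sigma> v else v) S S"
      using assms(1) by (rule bij_betw_cong[THEN iffD2, rotated]) simp
  qed (auto simp: bij_betw_def inj_on_def)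
  then show ?thesis using assms(2) by (simp add: sup.absorb2)
qed

section \<open>Weighted cycle decompositions of closed walks\<close>

lemma mset_rotate1 [simp]: "mset (rotate1 xs) = mset xs"
  by (cases xs) simp_all

lemma mset_le_of_distinct: "distinct xs \<Longrightarrow> set xs \<subseteq> set_mset M \<Longrightarrow> mset xs \<subseteq># M"
  by (auto simp: subseteq_mset_def distinct_count_atmost_1 Suc_le_eq)

lemma image_mset_cycle_arcs [simp]:
  "image_mset fst (mset (cycle_arcs Z)) = mset Z" "image_mset snd (mset (cycle_arcs Z)) = mset Z"
  by (simp_all flip: mset_map)

lemma balanced_has_cycle:
  assumes "H \<noteq> {#}" and balanced: "image_mset fst H = image_mset snd H"
  obtains Z where "Z \<noteq> []" "distinct Z" "mset (cycle_arcs Z) \<subseteq># H"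
proof -
  define V where "V = snd ` set_mset H"
  have "\<exists>a. a \<in># H \<and> fst a = v" if "v \<in> V" for v
  proof -
    have "v \<in># image_mset fst H" using that balanced by (simp add: V_def)
    then show ?thesis by auto
  qed
  then obtain a where a: "a v \<in># H" "fst (a v) = v" if "v \<in> V" for v
    by metis
  define s where "s v = snd (a v)" for v
  have s: "(v, s v) \<in># H" if "v \<in> V" for v
    using a[OF that] unfolding s_def by (metis prod.collapse)
  have "s v \<in> V" if "v \<in> V" for v using s[OF that] V_def by force
  moreover obtain v0 where "v0 \<in> V" using \<open>H \<noteq> {#}\<close> V_def by fastforce
  ultimately obtain Z where Z: "Z \<noteq> []" "distinct Z" "set Z \<subseteq> V" "rotate1 Z = map s Z"
    using finite_map_has_cycle[of V s v0] V_def by auto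
  have "mset (map (\<lambda>z. (z, s z)) Z) \<subseteq># H"
    using Z(2,3) s by (intro mset_le_of_distinct) (auto simp: distinct_map inj_on_def)
  then show ?thesis using that Z(1,2) by (simp only: cycle_arcs_of_map[OF Z(4)])
qed

lemma heads_remove_cycle:
  "mset (cycle_arcs Z) \<subseteq># H \<Longrightarrow> image_mset snd H = image_mset snd (H - mset (cycle_arcs Z)) + mset Z"
  by (metis image_mset_cycle_arcs(2) image_mset_union subset_mset.diff_add)

lemma sum_mset_image_mset_distinct: "distinct xs \<Longrightarrow> sum_mset (image_mset h (mset xs)) = sum h (set xs)"
  by (simp add: sum_unfold_sum_mset mset_set_set)

text \<open>A closed walk, i.e.\ a balanced multiset H of arcs, is a sum of cycles; n counts those
  through all of W.\<close>

lemma balanced_weight_decomposition: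
  fixes h :: "'a \<Rightarrow> 'g::ab_group_add"
  assumes proper_zero: "\<And>Z. Z \<noteq> [] \<Longrightarrow> distinct Z \<Longrightarrow> set (cycle_arcs Z) \<subseteq> G \<Longrightarrow> set Z \<subset> W
      \<Longrightarrow> sum h (set Z) = 0"
  shows "set_mset H \<subseteq> G \<Longrightarrow> snd ` set_mset H \<subseteq> W \<Longrightarrow> image_mset fst H = image_mset snd H \<Longrightarrow>
    \<exists>n. sum_mset (image_mset h (image_mset snd H)) = sum_list (replicate n (sum h W)) \<and>
      (\<forall>v\<in>W. n \<le> count (image_mset snd H) v)"
proof (induction "size H" arbitrary: H rule: less_induct)
  case less
  show ?case
  proof (cases "H = {#}")
    case True
    then show ?thesis by (intro exI[of _ 0]) simp
  next
    case False
    then obtain Z where Z: "Z \<noteq> []" "distinct Z" "mset (cycle_arcs Z) \<subseteq># H"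
      using balanced_has_cycle less.prems(3) by blast
    define H' where "H' = H - mset (cycle_arcs Z)"
    have heads: "image_mset snd H = image_mset snd H' + mset Z"
      using heads_remove_cycle[OF Z(3)] by (simp add: H'_def)
    have "set_mset H' \<subseteq> set_mset H" by (auto simp: H'_def dest: in_diffD)
    have "\<exists>n. sum_mset (image_mset h (image_mset snd H')) = sum_list (replicate n (sum h W)) \<and>
      (\<forall>v\<in>W. n \<le> count (image_mset snd H') v)"
    proof (rule less.hyps)
      show "size H' < size H"
        using Z(1) False by (auto simp: H'_def size_Diff_submset[OF Z(3)] nonempty_has_size intro!: diff_less)
      show "image_mset fst H' = image_mset snd H'"
        using Z(3) less.prems(3) by (simp add: H'_def image_mset_Diff)
    qed (use \<open>set_mset H' \<subseteq> set_mset H\<close> less.prems(1,2) in auto)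
    then obtain n where n: "sum_mset (image_mset h (image_mset snd H')) = sum_list (replicate n (sum h W))"
      "\<forall>v\<in>W. n \<le> count (image_mset snd H') v"
      by blast
    have "set Z \<subseteq> W"
      using heads less.prems(2) by (metis set_image_mset set_mset_union Un_upper2 set_mset_mset subset_trans)
    have "set (cycle_arcs Z) \<subseteq> G"
      using Z(3) less.prems(1) by (metis set_mset_mono set_mset_mset subset_trans)
    show ?thesis
    proof (cases "set Z = W")
      case True
      then show ?thesis using n heads Z(2)
        by (intro exI[of _ "Suc n"])
          (auto simp: add.commute distinct_count_atmost_1 sum_mset_image_mset_distinct)
    next
      case False
      then have "sum h (set Z) = 0"
        using proper_zero Z(1,2) \<open>set (cycle_arcs Z) \<subseteq> G\<close> \<open>set Z \<subseteq> W\<close> by blast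
      then show ?thesis using n heads Z(2)
        by (intro exI[of _ n]) (auto simp: sum_mset_image_mset_distinct intro: le_add1 order_trans)
    qed
  qed
qed

lemma double_cover_weight_zero:
  fixes h :: "'a \<Rightarrow> 'g::ab_group_add"
  assumes no_two_torsion: "\<forall>g::'g. g + g = 0 \<longrightarrow> g = 0"
    and proper_zero: "\<And>Z. Z \<noteq> [] \<Longrightarrow> distinct Z \<Longrightarrow> set (cycle_arcs Z) \<subseteq> G \<Longrightarrow> set Z \<subset> set C
      \<Longrightarrow> sum h (set Z) = 0"
    and C: "distinct C"
    and H: "set_mset H \<subseteq> G" "image_mset fst H = mset C + mset C" "image_mset snd H = mset C + mset C"
    and Z: "Z \<noteq> []" "distinct Z" "set (cycle_arcs Z) \<subseteq> set_mset H" "set Z \<subset> set C"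
  shows "sum h (set C) = 0"
proof -
  have Z_in_H: "mset (cycle_arcs Z) \<subseteq># H"
    using Z(2,3) by (simp add: mset_le_of_distinct distinct_zipI1)
  define H' where "H' = H - mset (cycle_arcs Z)"
  have heads: "image_mset snd H = image_mset snd H' + mset Z"
    using heads_remove_cycle[OF Z_in_H] by (simp add: H'_def)
  have "set_mset H' \<subseteq> G" using H(1) by (auto simp: H'_def dest: in_diffD)
  moreover have "snd ` set_mset H' \<subseteq> set C"
    using arg_cong[OF heads, of set_mset] H(3) by auto
  moreover have "image_mset fst H' = image_mset snd H'"
    using Z_in_H H(2,3) by (simp add: H'_def image_mset_Diff)
  ultimately have "\<exists>n. sum_mset (image_mset h (image_mset snd H')) = sum_list (replicate n (sum h (set C))) \<and>
      (\<forall>v\<in>set C. n \<le> count (image_mset snd H') v)"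
    by (rule balanced_weight_decomposition[rotated]) (rule proper_zero)
  then obtain n where n: "sum_mset (image_mset h (image_mset snd H')) = sum_list (replicate n (sum h (set C)))"
      "\<forall>v\<in>set C. n \<le> count (image_mset snd H') v"
    by blast
  obtain v where "v \<in> set Z" using Z(1) by (cases Z) auto
  have "count (image_mset snd H) v = count (image_mset snd H') v + 1"
    using heads \<open>v \<in> set Z\<close> Z(2) by (simp add: distinct_count_atmost_1)
  moreover have "count (image_mset snd H) v = 2"
    using H(3) C \<open>v \<in> set Z\<close> Z(4) by (auto simp: distinct_count_atmost_1)
  moreover have "n \<le> count (image_mset snd H') v" using n(2) \<open>v \<in> set Z\<close> Z(4) by blast
  ultimately have "n \<le> 1" by linarith
  have "sum h (set C) + sum h (set C) = sum_mset (image_mset h (image_mset snd H))"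
    using H(3) C by (simp add: sum_mset_image_mset_distinct)
  also have "\<dots> = sum_list (replicate n (sum h (set C))) + sum h (set Z)"
    using heads n(1) Z(2) by (simp add: sum_mset_image_mset_distinct)
  also have "sum h (set Z) = 0"
    by (rule proper_zero[OF Z(1,2) _ Z(4)]) (use Z(3) H(1) in blast)
  finally have "sum h (set C) + sum h (set C) = sum_list (replicate n (sum h (set C)))"
    by simp
  with \<open>n \<le> 1\<close> have "sum h (set C) + sum h (set C) = 0 \<or> sum h (set C) = 0"
    by (cases n) auto
  then show ?thesis using no_two_torsion by blast
qed

lemma shifted_chords_weight_zero:
  fixes h :: "'a \<Rightarrow> 'g::ab_group_add"
  assumes no_two_torsion: "\<forall>g::'g. g + g = 0 \<longrightarrow> g = 0"
    and proper_zero: "\<And>Z. Z \<noteq> [] \<Longrightarrow> distinct Z \<Longrightarrow> set (cycle_arcs Z) \<subseteq> G \<Longrightarrow> set Z \<subset> set C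
      \<Longrightarrow> sum h (set Z) = 0"
    and C: "dcycle G C"
    and S: "S \<subseteq> set C" "S \<noteq> {}" "bij_betw \<sigma> S S" "\<forall>z\<in>S. \<sigma> z \<noteq> z"
    and chords: "\<forall>z\<in>S. (z, cycle_succ C (\<sigma> z)) \<in> G"
  shows "sum h (set C) = 0"
proof -
  let ?nxt = "cycle_succ C"
  have "distinct C" using C by (simp add: dcycle_iff)
  have nxt_bij: "bij_betw ?nxt (set C) (set C)" by (rule bij_betw_cycle_succ[OF \<open>distinct C\<close>])
  define s where "s v = ?nxt (if v \<in> S then \<sigma> v else v)" for v
  have "bij_betw s (set C) (set C)"
    unfolding s_def using bij_betw_trans[OF bij_betw_extend_id[OF S(3,1)] nxt_bij] by (simp add: comp_def)
  then have "mset (map s C) = mset C"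
    using \<open>distinct C\<close> set_eq_iff_mset_eq_distinct[of "map s C" C] by (simp add: bij_betw_def distinct_map)
  \<comment> \<open>C together with the copy of C in which each arc \<open>z \<rightarrow> ?nxt z\<close>, \<open>z \<in> S\<close>, is rerouted
      along the chord \<open>z \<rightarrow> ?nxt (\<sigma> z)\<close>\<close>
  define H where "H = mset (cycle_arcs C) + mset (map (\<lambda>v. (v, s v)) C)"
  have H_fst: "image_mset fst H = mset C + mset C" and H_snd: "image_mset snd H = mset C + mset C"
    using \<open>mset (map s C) = mset C\<close> by (simp_all add: H_def comp_def flip: mset_map)
  have "set_mset H \<subseteq> G"
    using C chords dcycle_cycle_succ_arc[OF C] by (auto simp: H_def s_def dcycle_iff)
  obtain t where "t \<in> S" using S(2) by blast
  then have "\<sigma> t \<in> set C" "t \<in> set C" using S(1,3) by (auto simp: bij_betw_def)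
  then have "?nxt (\<sigma> t) \<noteq> ?nxt t"
    using S(4) \<open>t \<in> S\<close> nxt_bij by (metis bij_betw_def inj_on_eq_iff)
  then obtain Z where Z: "Z \<noteq> []" "distinct Z" "set Z \<subseteq> set C" "?nxt t \<notin> set Z"
      "rotate1 Z = map (?nxt(t := ?nxt (\<sigma> t))) Z"
    using shortcut_cycle[OF \<open>distinct C\<close> \<open>t \<in> set C\<close>, of "?nxt (\<sigma> t)"]
      \<open>\<sigma> t \<in> set C\<close> nxt_bij
    by (auto simp: bij_betw_def)
  have "set (cycle_arcs Z) \<subseteq> set_mset H"
  proof
    fix a assume "a \<in> set (cycle_arcs Z)"
    then obtain z where "z \<in> set C" "a = (z, (?nxt(t := ?nxt (\<sigma> t))) z)"
      using Z(3) by (auto simp: cycle_arcs_of_map[OF Z(5)])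
    then show "a \<in> set_mset H"
      using \<open>t \<in> S\<close> by (cases "z = t") (auto simp: H_def s_def
          cycle_arcs_of_map[OF rotate1_eq_map_cycle_succ[OF \<open>distinct C\<close>]])
  qed
  moreover have "set Z \<subset> set C"
    using Z(3,4) \<open>t \<in> S\<close> S(1) nxt_bij by (auto simp: bij_betw_def)
  ultimately show ?thesis
    using double_cover_weight_zero[OF no_two_torsion _ \<open>distinct C\<close> \<open>set_mset H \<subseteq> G\<close>
        H_fst H_snd Z(1,2)] proper_zero
    by blast
qed

section \<open>Exchanges of matroid bases\<close>

lemma matroid_basis_exchange:
  assumes "matroid E M" "B1 \<in> M" "B2 \<in> M" "x \<in> B1" "x \<notin> B2"
  obtains y where "y \<in> B2" "y \<notin> B1" "insert y (B1 - {x}) \<in> M"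
  using assms unfolding matroid_def by blast

lemma basis_exchange_swap_iff:
  assumes m: "matroid E M" and B: "B \<in> M" and x1: "x1 \<in> B" and y1: "y1 \<notin> B"
    and B1: "insert y1 (B - {x1}) \<in> M" and y: "y \<notin> B" "y \<noteq> y1"
    and nb: "insert y (B - {x1}) \<notin> M" and x: "x \<in> B" "x \<noteq> x1"
  shows "insert y (B - {x}) \<in> M \<longleftrightarrow> insert y (insert y1 (B - {x1}) - {x}) \<in> M"
proof
  assume D: "insert y (B - {x}) \<in> M"
  obtain z where z: "z \<in> insert y1 (B - {x1})" "z \<notin> insert y (B - {x})"
    "insert z (insert y (B - {x}) - {x1}) \<in> M"
    using matroid_basis_exchange[OF m D B1, of x1] x1 x y1 by auto
  from z(1,2) have "z = y1 \<or> z = x" using y by auto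
  moreover have "insert x (insert y (B - {x}) - {x1}) = insert y (B - {x1})"
    using x x1 y by auto
  ultimately have "z = y1" using z(3) nb by auto
  moreover have "insert y1 (insert y (B - {x}) - {x1}) = insert y (insert y1 (B - {x1}) - {x})"
    using x x1 y y1 by auto
  ultimately show "insert y (insert y1 (B - {x1}) - {x}) \<in> M" using z(3) by simp
next
  assume D: "insert y (insert y1 (B - {x1}) - {x}) \<in> M"
  obtain z where z: "z \<in> B" "z \<notin> insert y (insert y1 (B - {x1}) - {x})"
    "insert z (insert y (insert y1 (B - {x1}) - {x}) - {y1}) \<in> M"
    using matroid_basis_exchange[OF m D B, of y1] y1 y x by auto
  from z(1,2) have "z = x1 \<or> z = x" by auto
  moreover have "insert x (insert y (insert y1 (B - {x1}) - {x}) - {y1}) = insert y (B - {x1})"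
    using x x1 y y1 by auto
  ultimately have "z = x1" using z(3) nb by auto
  moreover have "insert x1 (insert y (insert y1 (B - {x1}) - {x}) - {y1}) = insert y (B - {x})"
    using x x1 y y1 by auto
  ultimately show "insert y (B - {x}) \<in> M" using z(3) by simp
qed

text \<open>An elimination order showing that \<open>x \<mapsto> \<sigma> x\<close> is the only perfect matching between X and
  \<open>\<sigma> ` X\<close> in the exchange graph of M at B.\<close>

definition unique_exchange_matching :: "'a set set \<Rightarrow> 'a set \<Rightarrow> 'a set \<Rightarrow> ('a \<Rightarrow> 'a) \<Rightarrow> bool" where
  "unique_exchange_matching M B X \<sigma> \<longleftrightarrow>
     (\<forall>X'\<subseteq>X. X' \<noteq> {} \<longrightarrow> (\<exists>x\<in>X'. \<forall>x'\<in>X' - {x}. insert (\<sigma> x') (B - {x}) \<notin> M))"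

lemma exchange_step_iff:
  assumes m: "matroid E M" and B: "B \<in> M" "X \<subseteq> B" "inj_on \<sigma> X" "\<sigma> ` X \<inter> B = {}"
    and x: "x \<in> X" "insert (\<sigma> x) (B - {x}) \<in> M" "\<forall>x'\<in>X - {x}. insert (\<sigma> x') (B - {x}) \<notin> M"
    and x': "x' \<in> X - {x}" and x'': "x'' \<in> X - {x}"
  shows "insert (\<sigma> x'') (insert (\<sigma> x) (B - {x}) - {x'}) \<in> M \<longleftrightarrow> insert (\<sigma> x'') (B - {x'}) \<in> M"
proof -
  have "\<sigma> x'' \<noteq> \<sigma> x" using x'' x(1) B(3) by (auto dest: inj_onD)
  moreover have "x \<in> B" "\<sigma> x \<notin> B" "\<sigma> x'' \<notin> B" "x' \<in> B"
    using x(1) x' x'' B(2,4) by auto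
  ultimately show ?thesis
    using basis_exchange_swap_iff[OF m B(1) _ _ x(2), of "\<sigma> x''" x'] x(3) x' x'' by blast
qed

lemma unique_exchange_matching_transfer:
  assumes "unique_exchange_matching M B X \<sigma>" "Y \<subseteq> X"
    and "\<And>x' x''. x' \<in> Y \<Longrightarrow> x'' \<in> Y \<Longrightarrow>
      insert (\<sigma> x'') (B' - {x'}) \<in> M \<longleftrightarrow> insert (\<sigma> x'') (B - {x'}) \<in> M"
  shows "unique_exchange_matching M B' Y \<sigma>"
  unfolding unique_exchange_matching_def
proof (intro allI impI)
  fix X' assume X': "X' \<subseteq> Y" "X' \<noteq> {}"
  then obtain x0 where "x0 \<in> X'" "\<forall>x'\<in>X' - {x0}. insert (\<sigma> x') (B - {x0}) \<notin> M"
    using assms(1,2) unfolding unique_exchange_matching_def by blast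
  then show "\<exists>x0\<in>X'. \<forall>x'\<in>X' - {x0}. insert (\<sigma> x') (B' - {x0}) \<notin> M"
    using assms(3) X' by blast
qed

lemma unique_matching_basis:
  assumes m: "matroid E M"
  shows "finite X \<Longrightarrow> B \<in> M \<Longrightarrow> X \<subseteq> B \<Longrightarrow> inj_on \<sigma> X \<Longrightarrow> \<sigma> ` X \<inter> B = {} \<Longrightarrow>
    \<forall>x\<in>X. insert (\<sigma> x) (B - {x}) \<in> M \<Longrightarrow> unique_exchange_matching M B X \<sigma> \<Longrightarrow>
    (B - X) \<union> \<sigma> ` X \<in> M"
proof (induction X arbitrary: B rule: finite_psubset_induct)
  case (psubset X)
  show ?case
  proof (cases "X = {}")
    case True
    then show ?thesis using psubset.prems by simp
  next
    case False
    then obtain x where x: "x \<in> X" and xn: "\<forall>x'\<in>X - {x}. insert (\<sigma> x') (B - {x}) \<notin> M"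
      using psubset.prems(6) unfolding unique_exchange_matching_def by blast
    define B' where "B' = insert (\<sigma> x) (B - {x})"
    have "B' \<in> M" using psubset.prems(5) x by (simp add: B'_def)
    note step = exchange_step_iff[OF m psubset.prems(1-4) x \<open>B' \<in> M\<close>[unfolded B'_def] xn,
        folded B'_def]
    have "(B' - (X - {x})) \<union> \<sigma> ` (X - {x}) \<in> M"
    proof (rule psubset.IH)
      show "X - {x} \<subset> X" "B' \<in> M" "X - {x} \<subseteq> B'" "inj_on \<sigma> (X - {x})"
        using x \<open>B' \<in> M\<close> psubset.prems(2,3) by (auto simp: B'_def intro: inj_on_subset)
      show "\<sigma> ` (X - {x}) \<inter> B' = {}"
        using psubset.prems(3,4) x unfolding B'_def inj_on_def by blast
      show "\<forall>x'\<in>X - {x}. insert (\<sigma> x') (B' - {x'}) \<in> M"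
        using step psubset.prems(5) by blast
      show "unique_exchange_matching M B' (X - {x}) \<sigma>"
        using unique_exchange_matching_transfer[OF psubset.prems(6)] step by blast
    qed
    moreover have "(B' - (X - {x})) \<union> \<sigma> ` (X - {x}) = (B - X) \<union> \<sigma> ` X"
      using x psubset.prems(2,4) unfolding B'_def by auto
    ultimately show ?thesis by simp
  qed
qed

section \<open>The exchange digraph\<close>

text \<open>The label of an exchange arc is the weight of its head.\<close>

definition exch_weight :: "'a set \<Rightarrow> ('a \<Rightarrow> 'g::ab_group_add) \<Rightarrow> 'a \<Rightarrow> 'g" where
  "exch_weight B \<psi> v = (if v \<in> B then - \<psi> v else \<psi> v)"

lemma exch_arc_from_basis:
  "(a, b) \<in> exch_arcs E M1 M2 B \<Longrightarrow> a \<in> B \<Longrightarrow> b \<in> E - B \<and> insert b (B - {a}) \<in> M1"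
  by (auto simp: exch_arcs_def)

lemma exch_arc_into_basis: "(a, b) \<in> exch_arcs E M1 M2 B \<Longrightarrow> a \<notin> B \<Longrightarrow> b \<in> B"
  by (auto simp: exch_arcs_def)

lemma exch_arcs_swap: "exch_arcs E M2 M1 B = (exch_arcs E M1 M2 B)\<inverse>"
  by (auto simp: exch_arcs_def)

lemma cycle_label_eq_exch_weight:
  assumes "dcycle (exch_arcs E M1 M2 B) cs"
  shows "cycle_label B \<psi> cs = sum (exch_weight B \<psi>) (set cs)"
proof -
  have "distinct cs" and arcs: "set (cycle_arcs cs) \<subseteq> exch_arcs E M1 M2 B"
    using assms by (auto simp: dcycle_iff)
  have "cycle_label B \<psi> cs = sum_list (map (arc_label B \<psi>) (cycle_arcs cs))"
    by (simp add: cycle_label_def sum_list_sum_nth atLeast0LessThan nth_rotate1)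
  also have "\<dots> = sum_list (map (exch_weight B \<psi> \<circ> snd) (cycle_arcs cs))"
    using arcs by (intro arg_cong[where f=sum_list] map_cong)
      (auto simp: arc_label_def exch_weight_def exch_arcs_def)
  also have "\<dots> = sum_list (map (exch_weight B \<psi>) (rotate1 cs))"
    by (simp flip: map_map)
  also have "\<dots> = sum_mset (image_mset (exch_weight B \<psi>) (mset cs))"
    by (metis mset_map mset_rotate1 sum_mset_sum_list)
  finally show ?thesis by (simp add: sum_mset_image_mset_distinct[OF \<open>distinct cs\<close>])
qed

lemma min_cycle_matching_condition:
  fixes \<psi> :: "'a \<Rightarrow> 'g::ab_group_add"
  assumes no_two_torsion: "\<forall>g::'g. g + g = 0 \<longrightarrow> g = 0"
    and cyc: "dcycle (exch_arcs E M1 M2 B) C"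
    and nz: "cycle_label B \<psi> C \<noteq> 0"
    and minimal: "\<forall>C'. dcycle (exch_arcs E M1 M2 B) C' \<and> cycle_label B \<psi> C' \<noteq> 0
                     \<longrightarrow> \<not> (set C' \<subset> set C)"
  shows "unique_exchange_matching M1 B (set C \<inter> B) (cycle_succ C)"
proof (rule ccontr)
  let ?G = "exch_arcs E M1 M2 B" and ?nxt = "cycle_succ C"
  assume "\<not> ?thesis"
  then obtain X' where X': "X' \<subseteq> set C \<inter> B" "X' \<noteq> {}"
    and "\<not> (\<exists>x\<in>X'. \<forall>x'\<in>X' - {x}. insert (?nxt x') (B - {x}) \<notin> M1)"
    unfolding unique_exchange_matching_def by auto
  then have "\<forall>x\<in>X'. \<exists>x'\<in>X' - {x}. insert (?nxt x') (B - {x}) \<in> M1"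
    by blast
  then obtain \<sigma> where \<sigma>: "\<sigma> x \<in> X' - {x}" "insert (?nxt (\<sigma> x)) (B - {x}) \<in> M1"
    if "x \<in> X'" for x
    by metis
  obtain x0 where "x0 \<in> X'" using X'(2) by blast
  moreover have "finite X'" using X'(1) by (auto intro: finite_subset)
  ultimately obtain Z where Z: "Z \<noteq> []" "distinct Z" "set Z \<subseteq> X'" "rotate1 Z = map \<sigma> Z"
    using finite_map_has_cycle[of X' \<sigma> x0] \<sigma>(1) by blast
  have "sum (exch_weight B \<psi>) (set C) = 0"
  proof (rule shifted_chords_weight_zero[OF no_two_torsion _ cyc])
    fix Z' assume "Z' \<noteq> []" "distinct Z'" "set (cycle_arcs Z') \<subseteq> ?G" "set Z' \<subset> set C"
    then have "dcycle ?G Z'" by (simp add: dcycle_iff)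
    with \<open>set Z' \<subset> set C\<close> have "cycle_label B \<psi> Z' = 0" using minimal by blast
    then show "sum (exch_weight B \<psi>) (set Z') = 0"
      by (simp add: cycle_label_eq_exch_weight[OF \<open>dcycle ?G Z'\<close>])
  next
    show "set Z \<subseteq> set C" "set Z \<noteq> {}" "\<forall>z\<in>set Z. \<sigma> z \<noteq> z"
      using Z(1,3) X'(1) \<sigma>(1) by auto
    show "bij_betw \<sigma> (set Z) (set Z)" by (rule bij_betw_of_rotate1[OF Z(2,4)])
    show "\<forall>z\<in>set Z. (z, ?nxt (\<sigma> z)) \<in> ?G"
    proof
      fix z assume "z \<in> set Z"
      then have "z \<in> X'" using Z(3) by blast
      then have z: "z \<in> B" "\<sigma> z \<in> set C \<inter> B" "insert (?nxt (\<sigma> z)) (B - {z}) \<in> M1"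
        using X'(1) \<sigma>[OF \<open>z \<in> X'\<close>] by auto
      then have "?nxt (\<sigma> z) \<in> E - B"
        using exch_arc_from_basis[OF dcycle_cycle_succ_arc[OF cyc]] by blast
      with z show "(z, ?nxt (\<sigma> z)) \<in> ?G" by (auto simp: exch_arcs_def)
    qed
  qed
  then show False using nz by (simp add: cycle_label_eq_exch_weight[OF cyc])
qed

lemma min_cycle_symdiff_basis:
  fixes \<psi> :: "'a \<Rightarrow> 'g::ab_group_add"
  assumes no_two_torsion: "\<forall>g::'g. g + g = 0 \<longrightarrow> g = 0"
    and m1: "matroid E M1" and B1: "B \<in> M1"
    and cyc: "dcycle (exch_arcs E M1 M2 B) C"
    and nz: "cycle_label B \<psi> C \<noteq> 0"
    and minimal: "\<forall>C'. dcycle (exch_arcs E M1 M2 B) C' \<and> cycle_label B \<psi> C' \<noteq> 0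
                     \<longrightarrow> \<not> (set C' \<subset> set C)"
  shows "(B - set C) \<union> (set C - B) \<in> M1"
proof -
  let ?nxt = "cycle_succ C" and ?X = "set C \<inter> B"
  have nxt_bij: "bij_betw ?nxt (set C) (set C)"
    using cyc by (simp add: dcycle_iff bij_betw_cycle_succ)
  have arc: "(v, ?nxt v) \<in> exch_arcs E M1 M2 B" if "v \<in> set C" for v
    by (rule dcycle_cycle_succ_arc[OF cyc that])
  have "(B - ?X) \<union> ?nxt ` ?X \<in> M1"
  proof (rule unique_matching_basis[OF m1])
    show "inj_on ?nxt ?X" using nxt_bij by (auto simp: bij_betw_def intro: inj_on_subset)
    show "?nxt ` ?X \<inter> B = {}" "\<forall>x\<in>?X. insert (?nxt x) (B - {x}) \<in> M1"
      using exch_arc_from_basis[OF arc] by auto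
    show "unique_exchange_matching M1 B ?X ?nxt"
      by (rule min_cycle_matching_condition[OF no_two_torsion cyc nz minimal])
    show "finite ?X" "B \<in> M1" "?X \<subseteq> B" using B1 by simp_all
  qed
  moreover have "?nxt ` ?X = set C - B"
  proof
    show "?nxt ` ?X \<subseteq> set C - B"
    proof
      fix y assume "y \<in> ?nxt ` ?X"
      then obtain x where "x \<in> set C" "x \<in> B" "y = ?nxt x" by blast
      then show "y \<in> set C - B"
        using exch_arc_from_basis[OF arc[OF \<open>x \<in> set C\<close>]] bij_betw_apply[OF nxt_bij \<open>x \<in> set C\<close>]
        by blast
    qed
    show "set C - B \<subseteq> ?nxt ` ?X"
    proof
      fix y assume y: "y \<in> set C - B"
      then obtain v where "v \<in> set C" "y = ?nxt v"
        using nxt_bij by (metis DiffD1 bij_betw_def imageE)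
      moreover have "v \<in> B"
        using exch_arc_into_basis[OF arc[OF \<open>v \<in> set C\<close>]] y \<open>y = ?nxt v\<close> by blast
      ultimately show "y \<in> ?nxt ` ?X" by blast
    qed
  qed
  moreover have "B - ?X = B - set C" by blast
  ultimately show ?thesis by simp
qed

lemma dcycle_exch_arcs_swap_iff:
  "dcycle (exch_arcs E M2 M1 B) Z \<longleftrightarrow> dcycle (exch_arcs E M1 M2 B) (rev Z)"
  using dcycle_converse_rev[of "exch_arcs E M1 M2 B" "rev Z"] by (simp add: exch_arcs_swap[of E M1 M2 B])

lemma cycle_label_rev:
  assumes "dcycle (exch_arcs E M1 M2 B) Z"
  shows "cycle_label B \<psi> (rev Z) = cycle_label B \<psi> Z"
proof -
  have "dcycle (exch_arcs E M2 M1 B) (rev Z)"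
    using assms dcycle_exch_arcs_swap_iff[of E M2 M1 B "rev Z"] by simp
  then show ?thesis
    by (simp add: cycle_label_eq_exch_weight[OF assms] cycle_label_eq_exch_weight[of E M2 M1 B "rev Z"])
qed

theorem lemma3p7:
  fixes E :: "'a set" and M1 M2 :: "'a set set" and \<psi> :: "'a \<Rightarrow> 'g::ab_group_add"
    and B :: "'a set" and C :: "'a list"
  assumes no_two_torsion: "\<forall>g::'g. g + g = 0 \<longrightarrow> g = 0"
    and m1: "matroid E M1" and m2: "matroid E M2"
    and B1: "B \<in> M1" and B2: "B \<in> M2"
    and cyc: "dcycle (exch_arcs E M1 M2 B) C"
    and nz: "cycle_label B \<psi> C \<noteq> 0"
    and minimal: "\<forall>C'. dcycle (exch_arcs E M1 M2 B) C' \<and> cycle_label B \<psi> C' \<noteq> 0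
                     \<longrightarrow> \<not> (set C' \<subset> set C)"
  shows "(B - set C) \<union> (set C - B) \<in> M1 \<and> (B - set C) \<union> (set C - B) \<in> M2"
proof
  show "(B - set C) \<union> (set C - B) \<in> M1"
    by (rule min_cycle_symdiff_basis[OF no_two_torsion m1 B1 cyc nz minimal])
  have "(B - set (rev C)) \<union> (set (rev C) - B) \<in> M2"
  proof (rule min_cycle_symdiff_basis[OF no_two_torsion m2 B2])
    show "dcycle (exch_arcs E M2 M1 B) (rev C)"
      using cyc dcycle_exch_arcs_swap_iff[of E M2 M1 B "rev C"] by simp
    show "cycle_label B \<psi> (rev C) \<noteq> 0" using nz by (simp add: cycle_label_rev[OF cyc])
    show "\<forall>C'. dcycle (exch_arcs E M2 M1 B) C' \<and> cycle_label B \<psi> C' \<noteq> 0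
      \<longrightarrow> \<not> set C' \<subset> set (rev C)"
    proof (intro allI impI)
      fix C' assume C': "dcycle (exch_arcs E M2 M1 B) C' \<and> cycle_label B \<psi> C' \<noteq> 0"
      then have "dcycle (exch_arcs E M1 M2 B) (rev C')"
        using dcycle_exch_arcs_swap_iff[of E M2 M1 B C'] by simp
      moreover have "cycle_label B \<psi> (rev C') \<noteq> 0"
        using C' cycle_label_rev[OF \<open>dcycle (exch_arcs E M1 M2 B) (rev C')\<close>] by (metis rev_rev_ident)
      ultimately have "\<not> set (rev C') \<subset> set C" using minimal by blast
      then show "\<not> set C' \<subset> set (rev C)" by simp
    qed
  qed
  then show "(B - set C) \<union> (set C - B) \<in> M2" by simp
qed

end
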